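(* For all $\lambda_0,\lambda_1\in\Lambda$, $|h(\lambda_0)-h(\lambda_1)|\le\rho\,|\lambda_0-\lambda_1|$.
   Context: Let $p$ be a prime, $\mathbb C_p$ with $p$-adic absolute value, $|p|=1/p$. $\Lambda=\{\lambda\in\mathbb C_p:|\lambda-1|<1\}$, $P_\lambda(z)=\frac{\lambda}{p}z^p+\left(1-\frac{\lambda}{p}\right)z^{p+1}$, $\rho=p^{-1/(p-1)}$. Fix $\hat r\in|\mathbb C_p^*|$, $\hat r>1$, $B=\{z:|z|\le\hat r\}$; $\mathcal H(B)$ is the ring of power series $\sum a_iz^i$ convergent on $B$ with norm $\|f\|_B=\sup_i|a_i|\hat r^{\,i}$. Fix $Q\in\mathcal H(B)$ with $\|Q\|_B<\rho$, $Q^*_\lambda=P_\lambda+Q$, and let $h(\lambda)$ be the unique fixed point of $Q^*_\lambda$ in $\{z:|z-1|\le|Q(1)|/p\}$. *)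

theory Defs
  imports "HOL-Analysis.Analysis" "HOL-Computational_Algebra.Polynomial"
begin

text \<open>An abstract model of C_p: a field of characteristic 0 with an absolute value av
  that is non-archimedean, normalised by |p| = 1/p, complete, algebraically closed, and in
  which the algebraic numbers (roots of nonzero rational polynomials) are dense.  These
  properties characterise C_p up to isometric isomorphism.\<close>

definition is_Cp :: "nat \<Rightarrow> ('a::field_char_0 \<Rightarrow> real) \<Rightarrow> bool" where
  "is_Cp p av \<longleftrightarrow>
     (\<forall>x. av x \<ge> 0) \<and> (\<forall>x. av x = 0 \<longleftrightarrow> x = 0) \<and>
     (\<forall>x y. av (x * y) = av x * av y) \<and>
     (\<forall>x y. av (x + y) \<le> max (av x) (av y)) \<and>
     av (of_nat p) = 1 / real p \<and>
     (\<forall>X::nat \<Rightarrow> 'a. (\<forall>e>0. \<exists>N. \<forall>m\<ge>N. \<forall>n\<ge>N. av (X m - X n) < e) \<longrightarrow>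
          (\<exists>L. (\<lambda>n. av (X n - L)) \<longlonglongrightarrow> 0)) \<and>
     (\<forall>q::'a poly. degree q \<ge> 1 \<longrightarrow> (\<exists>z. poly q z = 0)) \<and>
     (\<forall>x e. e > 0 \<longrightarrow> (\<exists>y. (\<exists>q::rat poly. q \<noteq> 0 \<and> poly (map_poly of_rat q) y = 0)
                              \<and> av (x - y) < e))"

definition rho :: "nat \<Rightarrow> real" where
  "rho p = real p powr (- 1 / (real p - 1))"

definition in_HB :: "('a \<Rightarrow> real) \<Rightarrow> real \<Rightarrow> (nat \<Rightarrow> 'a) \<Rightarrow> bool" where
  "in_HB av rhat a \<longleftrightarrow> (\<lambda>i. av (a i) * rhat ^ i) \<longlonglongrightarrow> 0"

definition HB_norm :: "('a \<Rightarrow> real) \<Rightarrow> real \<Rightarrow> (nat \<Rightarrow> 'a) \<Rightarrow> real" where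
  "HB_norm av rhat a = (SUP i. av (a i) * rhat ^ i)"

definition ps_eval :: "('a::ring_1 \<Rightarrow> real) \<Rightarrow> (nat \<Rightarrow> 'a) \<Rightarrow> 'a \<Rightarrow> 'a" where
  "ps_eval av a z = (THE s. (\<lambda>n. av ((\<Sum>i<n. a i * z ^ i) - s)) \<longlonglongrightarrow> 0)"

definition Plam :: "nat \<Rightarrow> 'a::field \<Rightarrow> 'a \<Rightarrow> 'a" where
  "Plam p l z = l / of_nat p * z ^ p + (1 - l / of_nat p) * z ^ (p + 1)"

definition Qstar :: "nat \<Rightarrow> ('a::field \<Rightarrow> real) \<Rightarrow> (nat \<Rightarrow> 'a) \<Rightarrow> 'a \<Rightarrow> 'a \<Rightarrow> 'a" where
  "Qstar p av a l z = Plam p l z + ps_eval av a z"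

definition h_fix :: "nat \<Rightarrow> ('a::field \<Rightarrow> real) \<Rightarrow> (nat \<Rightarrow> 'a) \<Rightarrow> 'a \<Rightarrow> 'a" where
  "h_fix p av a l = (THE z. av (z - 1) \<le> av (ps_eval av a 1) / real p \<and> Qstar p av a l z = z)"

end

(* The fixed-point equation Q*_l(z) = z is equivalent, for nonzero l and z, to z = T_l(z) with
   T_l(z) = 1 + p N(z) / (l z^p) and N(z) = z^(p+1) - z + Q(z).  On the disc |z - 1| <= r,
   r = |Q(1)|/p, every z is a unit, N is 1-Lipschitz and |N(z)| <= |Q(1)|; since |p| = 1/p,
   T_l is therefore a (1/p)-contraction of this disc into itself, and
   |T_l(z) - T_m(z)| <= r |l - m|.  So h(l) is the Banach fixed point of T_l, and the
   ultrametric inequality gives |h(l) - h(m)| <= max (|h(l) - h(m)|/p) (r |l - m|), whence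
   |h(l) - h(m)| <= r |l - m|.  Finally r <= ||Q||_B < rho. *)

theory Submission
  imports Defs
begin

locale nonarch_abs =
  fixes av :: "'a::field \<Rightarrow> real"
  assumes av_nonneg: "0 \<le> av x"
    and av_eq_0_iff: "av x = 0 \<longleftrightarrow> x = 0"
    and av_mult: "av (x * y) = av x * av y"
    and av_add_le_max: "av (x + y) \<le> max (av x) (av y)"
begin

abbreviation av_tendsto :: "(nat \<Rightarrow> 'a) \<Rightarrow> 'a \<Rightarrow> bool" where
  "av_tendsto X L \<equiv> (\<lambda>n. av (X n - L)) \<longlonglongrightarrow> 0"

abbreviation av_Cauchy :: "(nat \<Rightarrow> 'a) \<Rightarrow> bool" where
  "av_Cauchy X \<equiv> \<forall>e>0. \<exists>N. \<forall>m\<ge>N. \<forall>n\<ge>N. av (X m - X n) < e"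

lemma av_0 [simp]: "av 0 = 0"
  by (simp add: av_eq_0_iff)

lemma av_le_0_iff [simp]: "av x \<le> 0 \<longleftrightarrow> x = 0"
  using av_nonneg[of x] av_eq_0_iff[of x] by linarith

lemma av_1 [simp]: "av 1 = 1"
  using av_mult[of 1 1] av_eq_0_iff[of 1] by simp

lemma av_minus [simp]: "av (- x) = av x"
proof -
  have "av (- 1) ^ 2 = 1"
    using av_mult[of "- 1" "- 1"] by (simp add: power2_eq_square)
  then have "av (- 1) = 1"
    using av_nonneg[of "- 1"] by (simp add: power2_eq_1_iff)
  then show ?thesis
    using av_mult[of "- 1" x] by simp
qed

lemma av_minus_commute: "av (x - y) = av (y - x)"
  by (metis av_minus minus_diff_eq)

lemma av_power: "av (x ^ n) = av x ^ n"
  by (induction n) (simp_all add: av_mult)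

lemma av_divide: "av (x / y) = av x / av y"
proof (cases "y = 0")
  case False
  then have "av (x / y) * av y = av x"
    by (simp flip: av_mult)
  with False show ?thesis
    by (simp add: av_eq_0_iff eq_divide_eq)
qed simp

lemma av_add_le: "av (x + y) \<le> av x + av y"
  using av_add_le_max[of x y] av_nonneg[of x] av_nonneg[of y] by linarith

lemma av_diff_le_max: "av (x - z) \<le> max (av (x - y)) (av (y - z))"
  using av_add_le_max[of "x - y" "y - z"] by simp

lemma av_add_eq_of_less:
  assumes "av x < av y"
  shows "av (x + y) = av y"
proof -
  have "av (x + y) \<le> av y" and "av y \<le> max (av (x + y)) (av x)"
    using av_add_le_max[of x y] av_add_le_max[of "x + y" "- x"] assms by simp_all
  with assms show ?thesis
    by linarith
qed

lemma av_sum_le: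
  assumes "\<And>i. i \<in> I \<Longrightarrow> av (f i) \<le> B" and "0 \<le> B"
  shows "av (sum f I) \<le> B"
  using assms
proof (induction I rule: infinite_finite_induct)
  case (insert i I)
  then have "av (f i) \<le> B" "av (sum f I) \<le> B"
    by simp_all
  then show ?case
    using av_add_le_max[of "f i" "sum f I"] insert.hyps by simp
qed simp_all

lemma av_mult_power_le: "av z \<le> 1 \<Longrightarrow> av (b * z ^ n) \<le> av b"
  using av_nonneg[of b] av_nonneg[of z]
  by (simp add: av_mult av_power mult_left_le power_le_one)

lemma av_power_diff_le:
  assumes "av x \<le> 1" "av y \<le> 1"
  shows "av (x ^ n - y ^ n) \<le> av (x - y)"
proof (induction n)
  case (Suc n)
  have "x ^ Suc n - y ^ Suc n = x * (x ^ n - y ^ n) + (x - y) * y ^ n"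
    by (simp add: algebra_simps)
  moreover have "av (x * (x ^ n - y ^ n)) \<le> av (x ^ n - y ^ n)"
    using assms av_nonneg by (simp add: av_mult mult_left_le_one_le)
  moreover have "av ((x - y) * y ^ n) \<le> av (x - y)"
    using av_mult_power_le[OF assms(2)] .
  ultimately show ?case
    using av_add_le_max[of "x * (x ^ n - y ^ n)" "(x - y) * y ^ n"] Suc by simp
qed (simp add: av_nonneg)

lemma av_tendsto_0_if_le:
  assumes "\<And>n. av (X n) \<le> f n" and "f \<longlonglongrightarrow> 0"
  shows "(\<lambda>n. av (X n)) \<longlonglongrightarrow> 0"
proof (rule Lim_null_comparison[OF always_eventually])
  show "\<forall>n. norm (av (X n)) \<le> f n"
    using assms(1) av_nonneg by simp
qed (fact assms(2))

lemma av_tendsto_unique: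
  assumes "av_tendsto X L" "av_tendsto X L'"
  shows "L = L'"
proof -
  have "(\<lambda>n. av (X n - L) + av (X n - L')) \<longlonglongrightarrow> 0"
    using tendsto_add[OF assms] by simp
  moreover have "av (L - L') \<le> av (X n - L) + av (X n - L')" for n
    using av_add_le[of "L - X n" "X n - L'"] av_minus_commute[of L "X n"] by simp
  ultimately have "av (L - L') \<le> 0"
    by (intro LIMSEQ_le_const) auto
  then show ?thesis
    by simp
qed

lemma av_tendsto_diff:
  assumes "av_tendsto X L" "av_tendsto Y K"
  shows "av_tendsto (\<lambda>n. X n - Y n) (L - K)"
proof (rule av_tendsto_0_if_le)
  show "(\<lambda>n. av (X n - L) + av (Y n - K)) \<longlonglongrightarrow> 0"
    using tendsto_add[OF assms] by simp
  show "av (X n - Y n - (L - K)) \<le> av (X n - L) + av (Y n - K)" for n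
    using av_add_le[of "X n - L" "K - Y n"] av_minus_commute[of K "Y n"]
    by (simp add: algebra_simps)
qed

lemma av_le_of_tendsto:
  assumes "av_tendsto X L" and "\<And>n. av (X n) \<le> B"
  shows "av L \<le> B"
proof (rule LIMSEQ_le_const)
  show "(\<lambda>n. B + av (X n - L)) \<longlonglongrightarrow> B"
    using tendsto_add[OF tendsto_const assms(1)] by simp
  have "av L \<le> B + av (X n - L)" for n
    using av_add_le[of "X n" "L - X n"] av_minus_commute[of L "X n"] assms(2)[of n] by simp
  then show "\<exists>N. \<forall>n\<ge>N. av L \<le> B + av (X n - L)"
    by blast
qed

lemma av_Cauchy_if_steps_tendsto_0:
  assumes "(\<lambda>n. av (X (Suc n) - X n)) \<longlonglongrightarrow> 0"
  shows "av_Cauchy X"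
proof (intro allI impI)
  fix e :: real
  assume "e > 0"
  then obtain N where N: "\<And>n. N \<le> n \<Longrightarrow> av (X (Suc n) - X n) < e"
    using LIMSEQ_D[OF assms] av_nonneg by fastforce
  have far: "av (X m - X n) < e" if "N \<le> n" "n \<le> m" for m n
    using that(2)
  proof (induction m rule: dec_induct)
    case (step m)
    then show ?case
      using av_diff_le_max[of "X (Suc m)" "X n" "X m"] N[of m] that(1) by simp
  qed (simp add: \<open>e > 0\<close>)
  show "\<exists>N. \<forall>m\<ge>N. \<forall>n\<ge>N. av (X m - X n) < e"
  proof (intro exI allI impI)
    fix m n
    assume "N \<le> m" "N \<le> n"
    then show "av (X m - X n) < e"
      using far[of n m] far[of m n] av_minus_commute[of "X m" "X n"] by (cases "n \<le> m") auto
  qed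
qed

lemma in_HB_coeff_le_HB_norm:
  assumes "in_HB av rhat a" "1 \<le> rhat"
  shows "av (a i) \<le> HB_norm av rhat a"
proof -
  have "bdd_above (range (\<lambda>i. av (a i) * rhat ^ i))"
    using assms(1) unfolding in_HB_def
    by (intro Bseq_bdd_above convergent_imp_Bseq convergentI)
  then have "av (a i) * rhat ^ i \<le> HB_norm av rhat a"
    unfolding HB_norm_def by (rule cSUP_upper[OF UNIV_I])
  moreover have "av (a i) \<le> av (a i) * rhat ^ i"
    using assms(2) av_nonneg[of "a i"] by (simp add: mult_le_cancel_left1 one_le_power)
  ultimately show ?thesis
    by linarith
qed

lemma in_HB_coeff_tendsto_0:
  assumes "in_HB av rhat a" "1 \<le> rhat"
  shows "(\<lambda>i. av (a i)) \<longlonglongrightarrow> 0"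
proof (rule av_tendsto_0_if_le)
  show "av (a i) \<le> av (a i) * rhat ^ i" for i
    using assms(2) av_nonneg[of "a i"] by (simp add: mult_le_cancel_left1 one_le_power)
  show "(\<lambda>i. av (a i) * rhat ^ i) \<longlonglongrightarrow> 0"
    using assms(1) unfolding in_HB_def .
qed

lemma av_fixpoint_dist_le:
  assumes "T z = z" "S y = y" "k < 1"
    and "av (T z - T y) \<le> k * av (z - y)" "av (T y - S y) \<le> d"
  shows "av (z - y) \<le> d"
proof -
  have "av (z - y) \<le> max (av (T z - T y)) (av (T y - S y))"
    using av_diff_le_max[of "T z" "S y" "T y"] assms(1,2) by simp
  then consider "av (z - y) \<le> k * av (z - y)" | "av (z - y) \<le> d"
    using assms(4,5) unfolding le_max_iff_disj by fastforce
  then show ?thesis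
  proof cases
    case 1
    then have "z = y"
      using assms(3) av_nonneg[of "z - y"] by (simp add: mult_le_cancel_right1 av_eq_0_iff)
    then show ?thesis
      using av_nonneg[of "T y - S y"] assms(5) by simp
  qed
qed

end

locale complete_nonarch_abs = nonarch_abs +
  assumes Cauchy_converges:
    "(\<forall>e>0. \<exists>N. \<forall>m\<ge>N. \<forall>n\<ge>N. av (X m - X n) < e)
      \<Longrightarrow> \<exists>L. (\<lambda>n. av (X n - L)) \<longlonglongrightarrow> 0"
begin

lemma contraction_has_fixpoint_in_ball:
  assumes "0 \<le> r" "0 \<le> k" "k < 1"
    and maps: "\<And>z. av (z - c) \<le> r \<Longrightarrow> av (T z - c) \<le> r"
    and contr: "\<And>z y. av (z - c) \<le> r \<Longrightarrow> av (y - c) \<le> r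
      \<Longrightarrow> av (T z - T y) \<le> k * av (z - y)"
  shows "\<exists>z. av (z - c) \<le> r \<and> T z = z"
proof -
  define zs where "zs n = (T ^^ n) c" for n
  have zs_Suc: "zs (Suc n) = T (zs n)" for n
    by (simp add: zs_def)
  have in_ball: "av (zs n - c) \<le> r" for n
    by (induction n) (simp_all add: zs_Suc maps \<open>0 \<le> r\<close> zs_def[of 0])
  have steps: "av (zs (Suc n) - zs n) \<le> k ^ n * r" for n
  proof (induction n)
    case 0
    then show ?case
      using maps[of c] \<open>0 \<le> r\<close> by (simp add: zs_Suc zs_def[of 0])
  next
    case (Suc n)
    have "zs (Suc (Suc n)) - zs (Suc n) = T (zs (Suc n)) - T (zs n)"
      by (simp only: zs_Suc)
    then have "av (zs (Suc (Suc n)) - zs (Suc n)) \<le> k * av (zs (Suc n) - zs n)"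
      using contr[OF in_ball in_ball] by simp
    also have "\<dots> \<le> k ^ Suc n * r"
      using mult_left_mono[OF Suc \<open>0 \<le> k\<close>] by (simp add: mult.assoc)
    finally show ?case .
  qed
  have "(\<lambda>n. k ^ n * r) \<longlonglongrightarrow> 0"
    using assms(2,3) by (intro tendsto_mult_left_zero[OF LIMSEQ_power_zero]) simp
  with steps have "(\<lambda>n. av (zs (Suc n) - zs n)) \<longlonglongrightarrow> 0"
    by (rule av_tendsto_0_if_le)
  then obtain L where L: "av_tendsto zs L"
    using Cauchy_converges[OF av_Cauchy_if_steps_tendsto_0] by blast
  have "av (L - c) \<le> r"
    using av_le_of_tendsto[of "\<lambda>n. zs n - c"] L in_ball by simp
  have "av_tendsto (\<lambda>n. zs (Suc n)) (T L)"
  proof (rule av_tendsto_0_if_le)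
    show "av (zs (Suc n) - T L) \<le> k * av (zs n - L)" for n
      using contr[OF in_ball \<open>av (L - c) \<le> r\<close>] zs_Suc by simp
    show "(\<lambda>n. k * av (zs n - L)) \<longlonglongrightarrow> 0"
      using tendsto_mult_right_zero[OF L] .
  qed
  moreover have "av_tendsto (\<lambda>n. zs (Suc n)) L"
    using LIMSEQ_Suc[OF L] .
  ultimately have "T L = L"
    by (rule av_tendsto_unique)
  with \<open>av (L - c) \<le> r\<close> show ?thesis
    by blast
qed

lemma ps_eval_tendsto:
  assumes "(\<lambda>i. av (a i)) \<longlonglongrightarrow> 0" "av z \<le> 1"
  shows "av_tendsto (\<lambda>n. \<Sum>i<n. a i * z ^ i) (ps_eval av a z)"
proof -
  have "av ((\<Sum>i<Suc n. a i * z ^ i) - (\<Sum>i<n. a i * z ^ i)) \<le> av (a n)" for n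
    using av_mult_power_le[OF assms(2)] by simp
  then have "(\<lambda>n. av ((\<Sum>i<Suc n. a i * z ^ i) - (\<Sum>i<n. a i * z ^ i))) \<longlonglongrightarrow> 0"
    using assms(1) by (rule av_tendsto_0_if_le)
  then have "\<exists>L. av_tendsto (\<lambda>n. \<Sum>i<n. a i * z ^ i) L"
    by (intro Cauchy_converges av_Cauchy_if_steps_tendsto_0)
  then obtain L where L: "av_tendsto (\<lambda>n. \<Sum>i<n. a i * z ^ i) L"
    by blast
  then have "ps_eval av a z = L"
    unfolding ps_eval_def by (rule the_equality) (rule av_tendsto_unique[OF _ L])
  with L show ?thesis
    by simp
qed

lemma av_ps_eval_le:
  assumes "(\<lambda>i. av (a i)) \<longlonglongrightarrow> 0" "\<And>i. av (a i) \<le> M" "av z \<le> 1"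
  shows "av (ps_eval av a z) \<le> M"
proof (rule av_le_of_tendsto[OF ps_eval_tendsto[OF assms(1,3)]])
  have "av (a i * z ^ i) \<le> M" for i
    using assms(2)[of i] av_mult_power_le[OF assms(3)] order_trans by blast
  then show "av (\<Sum>i<n. a i * z ^ i) \<le> M" for n
    using av_nonneg[of "a 0"] assms(2)[of 0] by (intro av_sum_le) simp_all
qed

lemma ps_eval_lipschitz:
  assumes "(\<lambda>i. av (a i)) \<longlonglongrightarrow> 0" "\<And>i. av (a i) \<le> M" "av z \<le> 1" "av y \<le> 1"
  shows "av (ps_eval av a z - ps_eval av a y) \<le> M * av (z - y)"
proof (rule av_le_of_tendsto)
  show "av_tendsto (\<lambda>n. (\<Sum>i<n. a i * z ^ i) - (\<Sum>i<n. a i * y ^ i))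
      (ps_eval av a z - ps_eval av a y)"
    using av_tendsto_diff[OF ps_eval_tendsto[OF assms(1,3)] ps_eval_tendsto[OF assms(1,4)]] .
  have "av (a i * (z ^ i - y ^ i)) \<le> M * av (z - y)" for i
    unfolding av_mult
    using assms(2)[of i] av_power_diff_le[OF assms(3,4), of i] av_nonneg
    by (meson mult_mono order_trans)
  then show "av ((\<Sum>i<n. a i * z ^ i) - (\<Sum>i<n. a i * y ^ i)) \<le> M * av (z - y)" for n
    using av_nonneg[of "a 0"] assms(2)[of 0] av_nonneg[of "z - y"]
    by (simp add: av_sum_le flip: sum_subtractf right_diff_distrib)
qed

end

locale Qstar_family = complete_nonarch_abs av for av :: "'a::field \<Rightarrow> real" +
  fixes p :: nat and a :: "nat \<Rightarrow> 'a" and M :: real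
  assumes p_ge_2: "2 \<le> p"
    and av_of_nat_p: "av (of_nat p) = 1 / real p"
    and coeff_tendsto_0: "(\<lambda>i. av (a i)) \<longlonglongrightarrow> 0"
    and coeff_le: "av (a i) \<le> M"
    and M_less_1: "M < 1"
begin

abbreviation Q :: "'a \<Rightarrow> 'a" where
  "Q \<equiv> ps_eval av a"

definition N :: "'a \<Rightarrow> 'a" where
  "N z = z ^ (p + 1) - z + Q z"

definition T :: "'a \<Rightarrow> 'a \<Rightarrow> 'a" where
  "T l z = 1 + of_nat p / l * N z / z ^ p"

definition r :: real where
  "r = av (Q 1) / real p"

lemma of_nat_p_neq_0: "(of_nat p :: 'a) \<noteq> 0"
  using av_of_nat_p p_ge_2 by auto

lemma M_nonneg: "0 \<le> M"
  using av_nonneg[of "a 0"] coeff_le[of 0] by linarith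

lemma av_Q1_le: "av (Q 1) \<le> M"
  using av_ps_eval_le[OF coeff_tendsto_0 coeff_le] by simp

lemma r_nonneg: "0 \<le> r"
  by (simp add: r_def av_nonneg)

lemma r_le_av_Q1: "r \<le> av (Q 1)"
  using av_nonneg[of "Q 1"] p_ge_2 by (simp add: r_def divide_le_eq mult_le_cancel_left1)

lemma r_less_1: "r < 1"
  using r_le_av_Q1 av_Q1_le M_less_1 by linarith

lemma av_eq_1_if_near_1: "av (z - 1) \<le> r \<Longrightarrow> av z = 1"
  using av_add_eq_of_less[of "z - 1" 1] r_less_1 by simp

lemma N_lipschitz:
  assumes "av z \<le> 1" "av y \<le> 1"
  shows "av (N z - N y) \<le> av (z - y)"
proof -
  have "av (z ^ (p + 1) - y ^ (p + 1)) \<le> av (z - y)"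
    using av_power_diff_le[OF assms] .
  moreover have "av (Q z - Q y) \<le> av (z - y)"
    using ps_eval_lipschitz[OF coeff_tendsto_0 coeff_le assms]
      mult_left_le_one_le[OF av_nonneg M_nonneg] M_less_1
    by (meson less_imp_le order_trans)
  moreover have "N z - N y = ((z ^ (p + 1) - y ^ (p + 1)) + - (z - y)) + (Q z - Q y)"
    by (simp add: N_def)
  ultimately show ?thesis
    using av_add_le_max[of "z ^ (p + 1) - y ^ (p + 1)" "- (z - y)"]
      av_add_le_max[of "(z ^ (p + 1) - y ^ (p + 1)) + - (z - y)" "Q z - Q y"]
      av_minus_commute[of y z]
    by simp
qed

lemma av_N_le:
  assumes "av (z - 1) \<le> r"
  shows "av (N z) \<le> av (Q 1)"
proof -
  have "av (N z - N 1) \<le> av (Q 1)"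
    using N_lipschitz[of z 1] av_eq_1_if_near_1[OF assms] assms r_le_av_Q1 by simp
  moreover have "N 1 = Q 1"
    by (simp add: N_def)
  ultimately show ?thesis
    using av_add_le_max[of "N z - N 1" "N 1"] by simp
qed

lemma T_maps_ball:
  assumes "av l = 1" "av (z - 1) \<le> r"
  shows "av (T l z - 1) \<le> r"
proof -
  have "av (T l z - 1) = av (N z) / real p"
    using assms av_eq_1_if_near_1[OF assms(2)] av_of_nat_p
    by (simp add: T_def av_mult av_divide av_power)
  also have "\<dots> \<le> r"
    using av_N_le[OF assms(2)] by (simp add: r_def divide_right_mono)
  finally show ?thesis .
qed

lemma T_contraction:
  assumes "av l = 1" "av (z - 1) \<le> r" "av (y - 1) \<le> r"
  shows "av (T l z - T l y) \<le> 1 / real p * av (z - y)"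
proof -
  have z: "av z = 1" and y: "av y = 1"
    using av_eq_1_if_near_1 assms(2,3) by auto
  then have "z \<noteq> 0" "y \<noteq> 0" "l \<noteq> 0"
    using assms(1) by auto
  then have "T l z - T l y
      = of_nat p / l * (((N z - N y) * y ^ p + N y * (y ^ p - z ^ p)) / (z ^ p * y ^ p))"
    by (simp add: T_def field_simps)
  then have "av (T l z - T l y)
      = 1 / real p * av ((N z - N y) * y ^ p + N y * (y ^ p - z ^ p))"
    using assms(1) z y av_of_nat_p by (simp add: av_mult av_divide av_power)
  moreover have "av ((N z - N y) * y ^ p) \<le> av (z - y)"
    using N_lipschitz[of z y] z y by (simp add: av_mult av_power)
  moreover have "av (N y * (y ^ p - z ^ p)) \<le> av (z - y)"
  proof -
    have "av (N y) \<le> 1"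
      using av_N_le[OF assms(3)] av_Q1_le M_less_1 by linarith
    moreover have "av (y ^ p - z ^ p) \<le> av (z - y)"
      using av_power_diff_le[of y z p] y z av_minus_commute[of y z] by simp
    ultimately show ?thesis
      using mult_mono[of "av (N y)" 1 "av (y ^ p - z ^ p)" "av (z - y)"] av_nonneg
      by (simp add: av_mult)
  qed
  ultimately show ?thesis
    using av_add_le_max[of "(N z - N y) * y ^ p" "N y * (y ^ p - z ^ p)"] p_ge_2
    by (simp add: divide_right_mono)
qed

lemma T_param_lipschitz:
  assumes "av l = 1" "av l' = 1" "av (z - 1) \<le> r"
  shows "av (T l z - T l' z) \<le> r * av (l - l')"
proof -
  have z: "av z = 1"
    using av_eq_1_if_near_1[OF assms(3)] .
  then have "z \<noteq> 0" "l \<noteq> 0" "l' \<noteq> 0"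
    using assms(1,2) by auto
  then have "T l z - T l' z = of_nat p * (l' - l) / (l * l') * (N z / z ^ p)"
    by (simp add: T_def field_simps)
  then have "av (T l z - T l' z) = av (N z) / real p * av (l - l')"
    using assms z av_of_nat_p av_minus_commute[of l' l] by (simp add: av_mult av_divide av_power)
  also have "\<dots> \<le> r * av (l - l')"
    using av_N_le[OF assms(3)] av_nonneg p_ge_2
    by (simp add: r_def mult_right_mono divide_right_mono)
  finally show ?thesis .
qed

lemma Qstar_eq_self_iff:
  assumes "l \<noteq> 0" "z \<noteq> 0"
  shows "Qstar p av a l z = z \<longleftrightarrow> T l z = z"
proof -
  have "Qstar p av a l z = z \<longleftrightarrow> of_nat p * N z = l * z ^ p * (z - 1)"
    using of_nat_p_neq_0 by (simp add: Qstar_def Plam_def N_def field_simps)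
  also have "\<dots> \<longleftrightarrow> T l z = z"
    using assms of_nat_p_neq_0 by (simp add: T_def field_simps)
  finally show ?thesis .
qed

lemma h_fix_in_ball_fixed:
  assumes "av l = 1"
  shows "av (h_fix p av a l - 1) \<le> r \<and> T l (h_fix p av a l) = h_fix p av a l"
proof -
  have "1 / real p < 1"
    using p_ge_2 by simp
  obtain z where z: "av (z - 1) \<le> r" "T l z = z"
    using contraction_has_fixpoint_in_ball[OF r_nonneg _ \<open>1 / real p < 1\<close>
        T_maps_ball[OF assms] T_contraction[OF assms]]
    by auto
  have unique: "y = z" if "av (y - 1) \<le> r" "T l y = y" for y
    using av_fixpoint_dist_le[of "T l" y "T l" z "1 / real p" 0,
        OF that(2) z(2) \<open>1 / real p < 1\<close> T_contraction[OF assms that(1) z(1)]]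
    by simp
  have l: "l \<noteq> 0"
    using assms by auto
  have nonzero: "y \<noteq> 0" if "av (y - 1) \<le> r" for y
    using av_eq_1_if_near_1[OF that] by auto
  have "h_fix p av a l = z"
    unfolding h_fix_def r_def[symmetric]
  proof (rule the_equality)
    show "av (z - 1) \<le> r \<and> Qstar p av a l z = z"
      using z Qstar_eq_self_iff[OF l nonzero[OF z(1)]] by simp
  next
    fix y
    assume "av (y - 1) \<le> r \<and> Qstar p av a l y = y"
    then show "y = z"
      using unique Qstar_eq_self_iff[OF l nonzero] by blast
  qed
  with z show ?thesis
    by simp
qed

lemma h_fix_lipschitz:
  assumes "av l0 = 1" "av l1 = 1"
  shows "av (h_fix p av a l0 - h_fix p av a l1) \<le> r * av (l0 - l1)"
proof (rule av_fixpoint_dist_le)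
  show "T l0 (h_fix p av a l0) = h_fix p av a l0" "T l1 (h_fix p av a l1) = h_fix p av a l1"
    using h_fix_in_ball_fixed assms by blast+
  show "1 / real p < 1"
    using p_ge_2 by simp
  show "av (T l0 (h_fix p av a l0) - T l0 (h_fix p av a l1))
      \<le> 1 / real p * av (h_fix p av a l0 - h_fix p av a l1)"
    using T_contraction h_fix_in_ball_fixed assms by blast
  show "av (T l0 (h_fix p av a l1) - T l1 (h_fix p av a l1)) \<le> r * av (l0 - l1)"
    using T_param_lipschitz h_fix_in_ball_fixed assms by blast
qed

end

lemma rho_less_1: "2 \<le> p \<Longrightarrow> rho p < 1"
  unfolding rho_def by (rule powr_less_one) (auto intro: divide_neg_pos)

lemma is_Cp_imp_complete_nonarch_abs:
  assumes "is_Cp p av"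
  shows "complete_nonarch_abs av"
proof
  show "0 \<le> av x" "av x = 0 \<longleftrightarrow> x = 0" "av (x * y) = av x * av y"
    "av (x + y) \<le> max (av x) (av y)" for x y
    using assms by (simp_all add: is_Cp_def)
  show "\<exists>L. (\<lambda>n. av (X n - L)) \<longlonglongrightarrow> 0"
    if "\<forall>e>0. \<exists>N. \<forall>m\<ge>N. \<forall>n\<ge>N. av (X m - X n) < e" for X
    using assms that unfolding is_Cp_def by blast
qed

theorem proposition3p4:
  fixes av :: "'a::field_char_0 \<Rightarrow> real" and p :: nat and rhat :: real
    and a :: "nat \<Rightarrow> 'a" and l0 l1 :: 'a
  assumes "prime p" and "is_Cp p av"
    and "rhat \<in> av ` (UNIV - {0})" and "rhat > 1"
    and "in_HB av rhat a" and "HB_norm av rhat a < rho p"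
    and "av (l0 - 1) < 1" and "av (l1 - 1) < 1"
  shows "av (h_fix p av a l0 - h_fix p av a l1) \<le> rho p * av (l0 - l1)"
proof -
  interpret complete_nonarch_abs av
    using assms(2) by (rule is_Cp_imp_complete_nonarch_abs)
  have "2 \<le> p"
    using assms(1) by (rule prime_ge_2_nat)
  interpret Qstar_family av p a "HB_norm av rhat a"
  proof
    show "av (of_nat p) = 1 / real p"
      using assms(2) by (simp add: is_Cp_def)
    show "(\<lambda>i. av (a i)) \<longlonglongrightarrow> 0" "av (a i) \<le> HB_norm av rhat a" for i
      using assms(4,5) in_HB_coeff_tendsto_0 in_HB_coeff_le_HB_norm by simp_all
    show "HB_norm av rhat a < 1"
      using assms(6) rho_less_1[OF \<open>2 \<le> p\<close>] by linarith
  qed (fact \<open>2 \<le> p\<close>)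
  have "av l0 = 1" "av l1 = 1"
    using av_add_eq_of_less[of "l0 - 1" 1] av_add_eq_of_less[of "l1 - 1" 1] assms(7,8)
    by simp_all
  then have "av (h_fix p av a l0 - h_fix p av a l1) \<le> r * av (l0 - l1)"
    by (rule h_fix_lipschitz)
  also have "\<dots> \<le> rho p * av (l0 - l1)"
    using r_le_av_Q1 av_Q1_le assms(6) by (intro mult_right_mono) (simp_all add: av_nonneg)
  finally show ?thesis .
qed

end
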